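(* Let $L$ be a distributive lattice with $|L|>1$. Then $L^*\setminus\{0\}$ is path connected, where $L^*\subseteq\mathbb R^L$ carries the product topology and $0$ denotes the constant zero homomorphism.
   Context: $L^*$ is the set of all lattice homomorphisms $x^*:L\to[-1,1]$, i.e. maps with $x^*(a\vee b)=\max\{x^*(a),x^*(b)\}$ and $x^*(a\wedge b)=\min\{x^*(a),x^*(b)\}$ for all $a,b\in L$; it is regarded as a subset of $\mathbb R^L$. *)

theory Defs
  imports "HOL-Analysis.Analysis"
begin

text \<open>The set L* of lattice homomorphisms from L into [-1,1] (with max/min),
  regarded as a subset of the function space L \<Rightarrow> real, which carries the
  product topology (HOL-Analysis, Function_Topology).\<close>
definition lattice_hom_dual :: "('a::lattice \<Rightarrow> real) set" where
  "lattice_hom_dual = {x. (\<forall>a. x a \<in> {-1..1}) \<and>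
      (\<forall>a b. x (sup a b) = max (x a) (x b)) \<and>
      (\<forall>a b. x (inf a b) = min (x a) (x b))}"

end

theory Submission
  imports Defs
begin

text \<open>Composing with a
  monotone self-map of [-1,1] preserves lattice homomorphisms, so t \<mapsto> max x (2t - 1) is a
  path in L* - {0} from x to the constant 1 when x has a positive value, and
  t \<mapsto> min x (1 - 2t) one to the constant -1 when x has a negative value. The two constants
  are joined through a homomorphism taking both signs: the indicator with values 1 and -1 of a
  prime filter containing a but not b, for some a \<noteq> b. Such a filter exists by the prime
  filter theorem, which is where distributivity enters.\<close>

definition lattice_filter :: "'a::lattice set \<Rightarrow> bool" where
  "lattice_filter F \<longleftrightarrow> (\<forall>x\<in>F. \<forall>y. x \<le> y \<longrightarrow> y \<in> F) \<and> (\<forall>x\<in>F. \<forall>y\<in>F. inf x y \<in> F)"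

text \<open>Neither notion excludes the empty set or the whole lattice.\<close>

definition prime_filter :: "'a::lattice set \<Rightarrow> bool" where
  "prime_filter F \<longleftrightarrow> lattice_filter F \<and> (\<forall>x y. sup x y \<in> F \<longrightarrow> x \<in> F \<or> y \<in> F)"

lemma lattice_filter_upward: "lattice_filter F \<Longrightarrow> x \<in> F \<Longrightarrow> x \<le> y \<Longrightarrow> y \<in> F"
  unfolding lattice_filter_def by blast

lemma lattice_filter_inf: "lattice_filter F \<Longrightarrow> x \<in> F \<Longrightarrow> y \<in> F \<Longrightarrow> inf x y \<in> F"
  unfolding lattice_filter_def by blast

lemma lattice_filter_inf_iff: "lattice_filter F \<Longrightarrow> inf x y \<in> F \<longleftrightarrow> x \<in> F \<and> y \<in> F"
  by (meson inf_le1 inf_le2 lattice_filter_inf lattice_filter_upward)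

lemma prime_filter_sup_iff: "prime_filter F \<Longrightarrow> sup x y \<in> F \<longleftrightarrow> x \<in> F \<or> y \<in> F"
  unfolding prime_filter_def by (meson lattice_filter_upward sup_ge1 sup_ge2)

lemma lattice_filter_principal: "lattice_filter {x. a \<le> x}"
  unfolding lattice_filter_def by auto

lemma lattice_filter_Union_chain:
  assumes "\<And>F. F \<in> C \<Longrightarrow> lattice_filter F" and "\<forall>F\<in>C. \<forall>G\<in>C. F \<subseteq> G \<or> G \<subseteq> F"
  shows "lattice_filter (\<Union>C)"
  unfolding lattice_filter_def
proof (intro conjI ballI allI impI)
  fix x y assume "x \<in> \<Union>C" "x \<le> y"
  then show "y \<in> \<Union>C" using assms(1) lattice_filter_upward by blast
next
  fix x y assume "x \<in> \<Union>C" "y \<in> \<Union>C"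
  then obtain F G where "F \<in> C" "G \<in> C" "x \<in> F" "y \<in> G" by blast
  with assms have "inf x y \<in> F \<or> inf x y \<in> G"
    by (metis lattice_filter_inf subsetD)
  then show "inf x y \<in> \<Union>C" using \<open>F \<in> C\<close> \<open>G \<in> C\<close> by blast
qed

lemma lattice_filter_adjoin:
  assumes "lattice_filter F"
  shows "lattice_filter {z. \<exists>f\<in>F. inf f x \<le> z}"
  unfolding lattice_filter_def
proof (intro conjI ballI allI impI)
  fix u v assume "u \<in> {z. \<exists>f\<in>F. inf f x \<le> z}" "u \<le> v"
  then show "v \<in> {z. \<exists>f\<in>F. inf f x \<le> z}" using order_trans by blast
next
  fix u v assume "u \<in> {z. \<exists>f\<in>F. inf f x \<le> z}" "v \<in> {z. \<exists>f\<in>F. inf f x \<le> z}"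
  then obtain f g where "f \<in> F" "g \<in> F" "inf f x \<le> u" "inf g x \<le> v" by blast
  moreover have "inf (inf f g) x \<le> inf f x" "inf (inf f g) x \<le> inf g x"
    by (intro inf_mono inf_le1 inf_le2 order_refl)+
  ultimately have "inf (inf f g) x \<le> inf u v"
    by (meson le_inf_iff order_trans)
  moreover have "inf f g \<in> F" using assms \<open>f \<in> F\<close> \<open>g \<in> F\<close> by (rule lattice_filter_inf)
  ultimately show "inf u v \<in> {z. \<exists>f\<in>F. inf f x \<le> z}" by blast
qed

lemma maximal_filter_avoiding_is_prime:
  fixes M :: "'a::distrib_lattice set"
  assumes M: "lattice_filter M" "b \<notin> M"
    and maximal: "\<And>F. lattice_filter F \<Longrightarrow> M \<subseteq> F \<Longrightarrow> b \<notin> F \<Longrightarrow> F = M"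
  shows "prime_filter M"
  unfolding prime_filter_def
proof (intro conjI allI impI M(1), rule ccontr)
  fix x y assume sup: "sup x y \<in> M" and "\<not> (x \<in> M \<or> y \<in> M)"
  have below_b: "\<exists>f\<in>M. inf f z \<le> b" if "z \<notin> M" for z
  proof -
    let ?F = "{u. \<exists>f\<in>M. inf f z \<le> u}"
    have "M \<noteq> {}" using sup by blast
    then have "z \<in> ?F" by (blast intro: inf_le2)
    moreover have "M \<subseteq> ?F" by (blast intro: inf_le1)
    ultimately have "b \<in> ?F"
      using maximal[OF lattice_filter_adjoin[OF M(1)]] \<open>z \<notin> M\<close> by blast
    then show ?thesis by blast
  qed
  obtain f g where "f \<in> M" "inf f x \<le> b" "g \<in> M" "inf g y \<le> b"
    using below_b \<open>\<not> (x \<in> M \<or> y \<in> M)\<close> by blast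
  moreover have "inf (inf f g) x \<le> inf f x" "inf (inf f g) y \<le> inf g y"
    by (intro inf_mono inf_le1 inf_le2 order_refl)+
  ultimately have "sup (inf (inf f g) x) (inf (inf f g) y) \<le> b"
    by (meson order_trans sup_least)
  then have "inf (inf f g) (sup x y) \<le> b"
    by (simp add: inf_sup_distrib1)
  moreover have "inf (inf f g) (sup x y) \<in> M"
    using M(1) \<open>f \<in> M\<close> \<open>g \<in> M\<close> sup by (simp add: lattice_filter_inf_iff)
  ultimately show False using M lattice_filter_upward by blast
qed

lemma prime_filter_separating:
  fixes a b :: "'a::distrib_lattice"
  assumes "\<not> a \<le> b"
  obtains M where "prime_filter M" "a \<in> M" "b \<notin> M"
proof -
  let ?A = "{F. lattice_filter F \<and> a \<in> F \<and> b \<notin> F}"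
  have "\<exists>M\<in>?A. \<forall>F\<in>?A. M \<subseteq> F \<longrightarrow> F = M"
  proof (rule subset_Zorn_nonempty)
    show "?A \<noteq> {}" using assms lattice_filter_principal[of a] by blast
    show "\<Union>C \<in> ?A" if "C \<noteq> {}" "subset.chain ?A C" for C
      using that lattice_filter_Union_chain[of C] unfolding subset_chain_def by blast
  qed
  then obtain M where "M \<in> ?A" and maximal: "\<And>F. F \<in> ?A \<Longrightarrow> M \<subseteq> F \<Longrightarrow> F = M" by blast
  then have "prime_filter M"
    by (intro maximal_filter_avoiding_is_prime[of M b]) blast+
  with \<open>M \<in> ?A\<close> show ?thesis using that by blast
qed

lemma lattice_hom_dual_range: "x \<in> lattice_hom_dual \<Longrightarrow> x z \<in> {-1..1}"
  unfolding lattice_hom_dual_def by blast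

lemma lattice_hom_dual_comp_mono:
  assumes "x \<in> lattice_hom_dual" "mono f" "f ` {-1..1} \<subseteq> {-1..1}"
  shows "f \<circ> x \<in> lattice_hom_dual"
  using assms unfolding lattice_hom_dual_def
  by (auto simp: max_of_mono[OF assms(2)] min_of_mono[OF assms(2)] image_subset_iff)

lemma prime_filter_sign_in_lattice_hom_dual:
  assumes "prime_filter M"
  shows "(\<lambda>z. if z \<in> M then 1 else -1) \<in> lattice_hom_dual"
  using assms prime_filter_sup_iff[OF assms] lattice_filter_inf_iff[of M]
  unfolding lattice_hom_dual_def prime_filter_def by auto

lemma path_component_lattice_hom_dual_comp:
  fixes x :: "'a::lattice \<Rightarrow> real" and F :: "real \<Rightarrow> real \<Rightarrow> real"
  assumes x: "x \<in> lattice_hom_dual"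
    and mono: "\<And>t. t \<in> {0..1} \<Longrightarrow> mono (F t)"
    and range: "\<And>t. t \<in> {0..1} \<Longrightarrow> F t ` {-1..1} \<subseteq> {-1..1}"
    and cont: "\<And>s. continuous_on {0..1} (\<lambda>t. F t s)"
    and nonzero: "\<And>t. t \<in> {0..1} \<Longrightarrow> F t \<circ> x \<noteq> (\<lambda>_. 0)"
  shows "path_component (lattice_hom_dual - {\<lambda>_. 0}) (F 0 \<circ> x) (F 1 \<circ> x)"
  unfolding path_component_def
proof (intro exI conjI)
  let ?g = "\<lambda>t. F t \<circ> x"
  show "path ?g"
    unfolding path_def comp_def by (intro continuous_on_coordinatewise_then_product cont)
  show "path_image ?g \<subseteq> lattice_hom_dual - {\<lambda>_. 0}"
    unfolding path_image_def
  proof (intro image_subsetI DiffI)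
    fix t :: real assume t: "t \<in> {0..1}"
    show "F t \<circ> x \<in> lattice_hom_dual"
      by (rule lattice_hom_dual_comp_mono[OF x mono[OF t] range[OF t]])
    show "F t \<circ> x \<notin> {\<lambda>_. 0}" using nonzero[OF t] by simp
  qed
qed (simp_all add: pathstart_def pathfinish_def)

lemma path_component_lattice_hom_dual_one:
  assumes x: "x \<in> lattice_hom_dual" and "x c > 0"
  shows "path_component (lattice_hom_dual - {\<lambda>_. 0}) x (\<lambda>_. 1)"
proof -
  let ?F = "\<lambda>t s::real. max s (2 * t - 1)"
  have "path_component (lattice_hom_dual - {\<lambda>_. 0}) (?F 0 \<circ> x) (?F 1 \<circ> x)"
  proof (rule path_component_lattice_hom_dual_comp[OF x])
    show "?F t \<circ> x \<noteq> (\<lambda>_. 0)" for t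
      using \<open>x c > 0\<close> by (auto simp: fun_eq_iff max_def intro!: exI[of _ c])
    show "continuous_on {0..1} (\<lambda>t. ?F t s)" for s by (intro continuous_intros)
  qed (auto simp: mono_def)
  moreover have "?F 0 \<circ> x = x" "?F 1 \<circ> x = (\<lambda>_. 1)"
    using lattice_hom_dual_range[OF x] by (simp_all add: fun_eq_iff max_absorb1 max_absorb2)
  ultimately show ?thesis by (simp only:)
qed

lemma path_component_lattice_hom_dual_minus_one:
  assumes x: "x \<in> lattice_hom_dual" and "x c < 0"
  shows "path_component (lattice_hom_dual - {\<lambda>_. 0}) x (\<lambda>_. -1)"
proof -
  let ?F = "\<lambda>t s::real. min s (1 - 2 * t)"
  have "path_component (lattice_hom_dual - {\<lambda>_. 0}) (?F 0 \<circ> x) (?F 1 \<circ> x)"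
  proof (rule path_component_lattice_hom_dual_comp[OF x])
    show "?F t \<circ> x \<noteq> (\<lambda>_. 0)" for t
      using \<open>x c < 0\<close> by (auto simp: fun_eq_iff min_def intro!: exI[of _ c])
    show "continuous_on {0..1} (\<lambda>t. ?F t s)" for s by (intro continuous_intros)
  qed (auto simp: mono_def)
  moreover have "?F 0 \<circ> x = x" "?F 1 \<circ> x = (\<lambda>_. -1)"
    using lattice_hom_dual_range[OF x] by (simp_all add: fun_eq_iff min_absorb1 min_absorb2)
  ultimately show ?thesis by (simp only:)
qed

lemma path_component_lattice_hom_dual_one_minus_one:
  fixes \<sigma> :: "'a::lattice \<Rightarrow> real"
  assumes \<sigma>: "\<sigma> \<in> lattice_hom_dual" and "\<sigma> a > 0" "\<sigma> b < 0"
  shows "path_component (lattice_hom_dual - {\<lambda>_. 0}) (\<lambda>_::'a. 1) (\<lambda>_. -1)"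
proof -
  have "path_component (lattice_hom_dual - {\<lambda>_. 0}) \<sigma> (\<lambda>_. 1)"
    using \<sigma> \<open>\<sigma> a > 0\<close> by (rule path_component_lattice_hom_dual_one)
  moreover have "path_component (lattice_hom_dual - {\<lambda>_. 0}) \<sigma> (\<lambda>_. -1)"
    using \<sigma> \<open>\<sigma> b < 0\<close> by (rule path_component_lattice_hom_dual_minus_one)
  ultimately show ?thesis by (rule path_component_trans[OF path_component_sym])
qed

lemma path_connected_lattice_hom_dual_minus_zero:
  assumes one_minus_one:
    "path_component (lattice_hom_dual - {\<lambda>_. 0}) (\<lambda>_::'a::lattice. 1) (\<lambda>_. -1)"
  shows "path_connected (lattice_hom_dual - {\<lambda>_::'a. 0::real})"
proof -
  let ?S = "lattice_hom_dual - {\<lambda>_::'a. 0::real}"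
  have to_one: "path_component ?S x (\<lambda>_. 1)" if "x \<in> ?S" for x
  proof -
    have x: "x \<in> lattice_hom_dual" "x \<noteq> (\<lambda>_. 0)" using that by auto
    then obtain c where "x c \<noteq> 0" by auto
    then consider "x c > 0" | "x c < 0" by linarith
    then show ?thesis
    proof cases
      case 1
      with x(1) show ?thesis by (rule path_component_lattice_hom_dual_one)
    next
      case 2
      with x(1) have "path_component ?S x (\<lambda>_. -1)"
        by (rule path_component_lattice_hom_dual_minus_one)
      then show ?thesis by (rule path_component_trans[OF _ path_component_sym[OF one_minus_one]])
    qed
  qed
  show ?thesis
    unfolding path_connected_component
    by (blast intro: path_component_trans[OF to_one path_component_sym[OF to_one]])
qed

theorem mainTheorem10:
  assumes "\<exists>a b :: 'a::distrib_lattice. a \<noteq> b"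
  shows "path_connected (lattice_hom_dual - {(\<lambda>_::'a. 0::real)})"
proof -
  obtain a b :: 'a where "\<not> a \<le> b" using assms by (metis order.antisym)
  then obtain M where M: "prime_filter M" "a \<in> M" "b \<notin> M" by (rule prime_filter_separating)
  let ?\<sigma> = "\<lambda>z. if z \<in> M then 1 else -1 :: real"
  have "?\<sigma> \<in> lattice_hom_dual" using M(1) by (rule prime_filter_sign_in_lattice_hom_dual)
  moreover have "?\<sigma> a > 0" "?\<sigma> b < 0" using M(2,3) by simp_all
  ultimately show ?thesis
    by (intro path_connected_lattice_hom_dual_minus_zero path_component_lattice_hom_dual_one_minus_one)
qed

end
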